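(* For a given diagonal section $\delta$ the function $D_\delta\colon [0,1]^2\to[0,1]$ defined by $$D_\delta(x,y)=\begin{cases}\overline{C}_\delta(x,y); & x\le y,\\ B_\delta(x,y); & x\ge y,\end{cases}$$ (the diagonal splice of $\overline{C}_\delta$ and $B_\delta$) is a copula.
   Context: A diagonal section is a function $\delta\colon[0,1]\to[0,1]$ that is the diagonal $x\mapsto C(x,x)$ of some bivariate copula $C$; equivalently $\delta(x)\le x$ for all $x$, $0\le\delta(y)-\delta(x)\le 2(y-x)$ for $x\le y$, and $\delta(1)=1$. Write $\widehat{\delta}(x)=x-\delta(x)$. Here $\overline{C}_\delta(x,y)=\sup\{C(x,y)\colon C \text{ a copula with } C(t,t)=\delta(t)\ \forall t\}$ is the pointwise supremum of all copulas with diagonal section $\delta$, and $B_\delta$ is the Bertino copula $B_\delta(x,y)=\min\{x,y\}-\min_{t\in[\min\{x,y\},\max\{x,y\}]}\widehat{\delta}(t)$. The two functions agree on the diagonal (both equal $\delta$ there), so the splice is well defined. *)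

theory Defs
  imports Complex_Main
begin

text \<open>A (bivariate) copula, viewed as a function on the unit square [0,1]^2
  (values outside the square are irrelevant).\<close>
definition copula :: "(real \<Rightarrow> real \<Rightarrow> real) \<Rightarrow> bool" where
  "copula C \<longleftrightarrow>
     (\<forall>x\<in>{0..1}. \<forall>y\<in>{0..1}. C x y \<in> {0..1}) \<and>
     (\<forall>x\<in>{0..1}. C x 0 = 0 \<and> C 0 x = 0 \<and> C x 1 = x \<and> C 1 x = x) \<and>
     (\<forall>x1\<in>{0..1}. \<forall>x2\<in>{0..1}. \<forall>y1\<in>{0..1}. \<forall>y2\<in>{0..1}.
        x1 \<le> x2 \<longrightarrow> y1 \<le> y2 \<longrightarrow> C x2 y2 - C x2 y1 - C x1 y2 + C x1 y1 \<ge> 0)"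

definition has_diagonal :: "(real \<Rightarrow> real \<Rightarrow> real) \<Rightarrow> (real \<Rightarrow> real) \<Rightarrow> bool" where
  "has_diagonal C \<delta> \<longleftrightarrow> (\<forall>t\<in>{0..1}. C t t = \<delta> t)"

definition diagonal_section :: "(real \<Rightarrow> real) \<Rightarrow> bool" where
  "diagonal_section \<delta> \<longleftrightarrow> (\<exists>C. copula C \<and> has_diagonal C \<delta>)"

definition Cbar :: "(real \<Rightarrow> real) \<Rightarrow> real \<Rightarrow> real \<Rightarrow> real" where
  "Cbar \<delta> x y = Sup {C x y | C. copula C \<and> has_diagonal C \<delta>}"

definition Bertino :: "(real \<Rightarrow> real) \<Rightarrow> real \<Rightarrow> real \<Rightarrow> real" where
  "Bertino \<delta> x y = min x y - Inf ((\<lambda>t. t - \<delta> t) ` {min x y..max x y})"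

definition Dsplice :: "(real \<Rightarrow> real) \<Rightarrow> real \<Rightarrow> real \<Rightarrow> real" where
  "Dsplice \<delta> x y = (if x \<le> y then Cbar \<delta> x y else Bertino \<delta> x y)"

end

theory Submission
  imports Defs
begin

(* Write \<delta>' t = t - \<delta> t and call \<delta>' a - min_{[a,b]} \<delta>' the drop from a to b. For a copula C
   with diagonal \<delta> and a \<le> s \<le> c, 2-increasingness together with the Bertino lower bound
   C c s \<ge> s - min_{[s,c]} \<delta>' bounds the drop from s to c by (\<delta> c - C a c) - (\<delta> s - C a s).
   Summing along chains, the total drop \<psi> x (supremum over chains 0 \<le> t1 \<le> ... \<le> x of the summed
   drops) satisfies \<psi> b - \<psi> a \<le> \<delta> b - C a b, so every such C lies below
   F x y = min x (\<delta> y - \<psi> y + \<psi> x) for x \<le> y.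
   Conversely, splicing F with the Bertino copula gives a copula with diagonal \<delta>: applied to one
   fixed C, the bound shows that x - \<psi> x and \<delta> y - \<psi> y are nondecreasing, which makes F
   2-increasing above the diagonal; the Bertino part is 2-increasing below it; and on a square
   [a,b]^2 the volume is nonnegative by the superadditivity \<psi> a + drop(a,b) \<le> \<psi> b. So F is
   Cbar \<delta> above the diagonal, and Dsplice \<delta> is this spliced copula. *)

definition box_volume :: "(real \<Rightarrow> real \<Rightarrow> real) \<Rightarrow> real \<Rightarrow> real \<Rightarrow> real \<Rightarrow> real \<Rightarrow> real" where
  "box_volume C x1 x2 y1 y2 = C x2 y2 - C x2 y1 - C x1 y2 + C x1 y1"

lemma copulaI:
  assumes "\<And>x y. x \<in> {0..1} \<Longrightarrow> y \<in> {0..1} \<Longrightarrow> C x y \<in> {0..1}"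
    and "\<And>x. x \<in> {0..1} \<Longrightarrow> C x 0 = 0 \<and> C 0 x = 0 \<and> C x 1 = x \<and> C 1 x = x"
    and "\<And>x1 x2 y1 y2. 0 \<le> x1 \<Longrightarrow> x1 \<le> x2 \<Longrightarrow> x2 \<le> 1 \<Longrightarrow> 0 \<le> y1 \<Longrightarrow> y1 \<le> y2 \<Longrightarrow> y2 \<le> 1
           \<Longrightarrow> 0 \<le> box_volume C x1 x2 y1 y2"
  shows "copula C"
  using assms unfolding copula_def box_volume_def by auto

lemma copula_range: "copula C \<Longrightarrow> x \<in> {0..1} \<Longrightarrow> y \<in> {0..1} \<Longrightarrow> C x y \<in> {0..1}"
  unfolding copula_def by auto

lemma copula_margins:
  assumes "copula C" "x \<in> {0..1}"
  shows "C x 0 = 0" "C 0 x = 0" "C x 1 = x" "C 1 x = x"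
  using assms unfolding copula_def by auto

lemma copula_box_volume_nonneg:
  "copula C \<Longrightarrow> x1 \<in> {0..1} \<Longrightarrow> x2 \<in> {0..1} \<Longrightarrow> y1 \<in> {0..1} \<Longrightarrow> y2 \<in> {0..1}
   \<Longrightarrow> x1 \<le> x2 \<Longrightarrow> y1 \<le> y2 \<Longrightarrow> 0 \<le> box_volume C x1 x2 y1 y2"
  unfolding copula_def box_volume_def by blast

lemma copula_mono_left:
  assumes "copula C" "y \<in> {0..1}" "x1 \<in> {0..1}" "x2 \<in> {0..1}" "x1 \<le> x2"
  shows "C x1 y \<le> C x2 y"
  using copula_box_volume_nonneg[OF assms(1,3,4) _ assms(2) assms(5), of 0]
    copula_margins[OF assms(1)] assms by (simp add: box_volume_def)

lemma copula_mono_right: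
  assumes "copula C" "x \<in> {0..1}" "y1 \<in> {0..1}" "y2 \<in> {0..1}" "y1 \<le> y2"
  shows "C x y1 \<le> C x y2"
  using copula_box_volume_nonneg[OF assms(1) _ assms(2,3,4) _ assms(5), of 0]
    copula_margins[OF assms(1)] assms by (simp add: box_volume_def)

lemma copula_lipschitz_left:
  assumes "copula C" "y \<in> {0..1}" "x1 \<in> {0..1}" "x2 \<in> {0..1}" "x1 \<le> x2"
  shows "C x2 y - C x1 y \<le> x2 - x1"
  using copula_box_volume_nonneg[OF assms(1,3,4,2) _ assms(5), of 1]
    copula_margins[OF assms(1)] assms by (simp add: box_volume_def)

lemma copula_lipschitz_right:
  assumes "copula C" "x \<in> {0..1}" "y1 \<in> {0..1}" "y2 \<in> {0..1}" "y1 \<le> y2"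
  shows "C x y2 - C x y1 \<le> y2 - y1"
  using copula_box_volume_nonneg[OF assms(1,2) _ assms(3,4) _ assms(5), of 1]
    copula_margins[OF assms(1)] assms by (simp add: box_volume_def)

lemma copula_cong:
  assumes "copula C" "\<And>x y. x \<in> {0..1} \<Longrightarrow> y \<in> {0..1} \<Longrightarrow> D x y = C x y"
  shows "copula D"
  using assms(1) unfolding copula_def by (simp add: assms(2))

lemma has_diagonalD: "has_diagonal C \<delta> \<Longrightarrow> t \<in> {0..1} \<Longrightarrow> C t t = \<delta> t"
  unfolding has_diagonal_def by blast

lemma box_volume_degenerate: "box_volume E x x y1 y2 = 0" "box_volume E x1 x2 y y = 0"
  unfolding box_volume_def by simp_all

lemma box_volume_min_nonneg:
  fixes f g h :: "real \<Rightarrow> real"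
  assumes "g x1 \<le> g x2" "h y1 \<le> h y2"
  shows "0 \<le> box_volume (\<lambda>x y. f x + min (g x) (h y)) x1 x2 y1 y2"
  using assms unfolding box_volume_def by (auto simp: min_def)

lemma box_volume_nonneg_by_triangles:
  assumes above: "\<And>x1 x2 y1 y2. 0 \<le> x1 \<Longrightarrow> x1 \<le> x2 \<Longrightarrow> x2 \<le> y1 \<Longrightarrow> y1 \<le> y2 \<Longrightarrow> y2 \<le> 1
           \<Longrightarrow> 0 \<le> box_volume E x1 x2 y1 y2"
    and below: "\<And>x1 x2 y1 y2. 0 \<le> y1 \<Longrightarrow> y1 \<le> y2 \<Longrightarrow> y2 \<le> x1 \<Longrightarrow> x1 \<le> x2 \<Longrightarrow> x2 \<le> 1
           \<Longrightarrow> 0 \<le> box_volume E x1 x2 y1 y2"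
    and square: "\<And>a b. 0 \<le> a \<Longrightarrow> a \<le> b \<Longrightarrow> b \<le> 1 \<Longrightarrow> 0 \<le> box_volume E a b a b"
    and box: "0 \<le> x1" "x1 \<le> x2" "x2 \<le> 1" "0 \<le> y1" "y1 \<le> y2" "y2 \<le> 1"
  shows "0 \<le> box_volume E x1 x2 y1 y2"
proof (cases "x2 \<le> y1 \<or> y2 \<le> x1")
  case True
  then show ?thesis using above below box by auto
next
  case False
  define a where "a = max x1 y1"
  define b where "b = min x2 y2"
  have ab: "x1 \<le> a" "y1 \<le> a" "a \<le> b" "b \<le> x2" "b \<le> y2"
    using False box unfolding a_def b_def by auto
  have "box_volume E x1 x2 y1 y2 =
      box_volume E x1 a y1 a + box_volume E x1 a a b + box_volume E x1 a b y2
    + box_volume E a b y1 a + box_volume E a b a b + box_volume E a b b y2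
    + box_volume E b x2 y1 a + box_volume E b x2 a b + box_volume E b x2 b y2"
    unfolding box_volume_def by simp
  moreover have "box_volume E x1 a y1 a = 0" "box_volume E b x2 b y2 = 0"
    unfolding a_def b_def by (auto simp: max_def min_def box_volume_degenerate)
  moreover have "0 \<le> box_volume E x1 a a b" "0 \<le> box_volume E x1 a b y2" "0 \<le> box_volume E a b b y2"
    using above ab box by auto
  moreover have "0 \<le> box_volume E a b y1 a" "0 \<le> box_volume E b x2 y1 a" "0 \<le> box_volume E b x2 a b"
    using below ab box by auto
  moreover have "0 \<le> box_volume E a b a b"
    using square ab box by auto
  ultimately show ?thesis by linarith
qed

definition min_hat :: "(real \<Rightarrow> real) \<Rightarrow> real \<Rightarrow> real \<Rightarrow> real" where
  "min_hat \<delta> a b = Inf ((\<lambda>t. t - \<delta> t) ` {a..b})"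

lemma min_hat_point: "min_hat \<delta> t t = t - \<delta> t"
  unfolding min_hat_def by simp

definition hat_drop :: "(real \<Rightarrow> real) \<Rightarrow> real \<Rightarrow> real \<Rightarrow> real" where
  "hat_drop \<delta> a b = (a - \<delta> a) - min_hat \<delta> a b"

definition sorted_chain :: "real \<Rightarrow> real list \<Rightarrow> real \<Rightarrow> bool" where
  "sorted_chain a P b \<longleftrightarrow> sorted (a # P) \<and> last (a # P) = b"

fun chain_drop :: "(real \<Rightarrow> real) \<Rightarrow> real \<Rightarrow> real list \<Rightarrow> real" where
  "chain_drop \<delta> a [] = 0"
| "chain_drop \<delta> a (b # P) = hat_drop \<delta> a b + chain_drop \<delta> b P"

definition total_drop :: "(real \<Rightarrow> real) \<Rightarrow> real \<Rightarrow> real" where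
  "total_drop \<delta> x = Sup {chain_drop \<delta> 0 P | P. sorted_chain 0 P x}"

lemma sorted_chain_Nil [simp]: "sorted_chain a [] b \<longleftrightarrow> a = b"
  unfolding sorted_chain_def by auto

lemma sorted_chain_Cons [simp]: "sorted_chain a (c # P) b \<longleftrightarrow> a \<le> c \<and> sorted_chain c P b"
  unfolding sorted_chain_def by (auto intro: order_trans)

lemma sorted_chain_le: "sorted_chain a P b \<Longrightarrow> a \<le> b"
  by (induction P arbitrary: a) (auto intro: order_trans)

lemma sorted_chain_snoc: "sorted_chain a P b \<Longrightarrow> b \<le> c \<Longrightarrow> sorted_chain a (P @ [c]) c"
  by (induction P arbitrary: a) auto

lemma chain_drop_snoc: "sorted_chain a P b \<Longrightarrow> chain_drop \<delta> a (P @ [c]) = chain_drop \<delta> a P + hat_drop \<delta> b c"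
  by (induction P arbitrary: a) auto

context
  fixes \<delta> :: "real \<Rightarrow> real"
  assumes \<delta>: "diagonal_section \<delta>"
begin

lemma diagonal_copula_exists: obtains C where "copula C" "has_diagonal C \<delta>"
  using \<delta> unfolding diagonal_section_def by blast

lemma diagonal_0: "\<delta> 0 = 0" and diagonal_1: "\<delta> 1 = 1"
proof -
  obtain C where "copula C" "has_diagonal C \<delta>" by (rule diagonal_copula_exists)
  then show "\<delta> 0 = 0" "\<delta> 1 = 1"
    using has_diagonalD[of C \<delta> 0] has_diagonalD[of C \<delta> 1] copula_margins[of C 0] copula_margins[of C 1]
    by auto
qed

lemma diagonal_le: "t \<in> {0..1} \<Longrightarrow> \<delta> t \<le> t"
proof -
  assume t: "t \<in> {0..1}"
  obtain C where C: "copula C" "has_diagonal C \<delta>" by (rule diagonal_copula_exists)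
  have "C t t \<le> C t 1" using copula_mono_right[OF C(1) t t] t by auto
  then show ?thesis using copula_margins(3)[OF C(1) t] has_diagonalD[OF C(2) t] by simp
qed

lemma diagonal_nonneg: "t \<in> {0..1} \<Longrightarrow> 0 \<le> \<delta> t"
proof -
  assume t: "t \<in> {0..1}"
  obtain C where C: "copula C" "has_diagonal C \<delta>" by (rule diagonal_copula_exists)
  show ?thesis using copula_range[OF C(1) t t] has_diagonalD[OF C(2) t] by simp
qed

lemma hat_image_bounded:
  assumes "0 \<le> a" "a \<le> b" "b \<le> 1"
  shows "(\<lambda>t. t - \<delta> t) ` {a..b} \<noteq> {}" "bdd_below ((\<lambda>t. t - \<delta> t) ` {a..b})"
  using assms diagonal_le by (auto intro!: bdd_belowI[where m = 0])

lemma min_hat_le: "0 \<le> a \<Longrightarrow> b \<le> 1 \<Longrightarrow> t \<in> {a..b} \<Longrightarrow> min_hat \<delta> a b \<le> t - \<delta> t"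
  unfolding min_hat_def using hat_image_bounded[of a b] by (intro cInf_lower) auto

lemma min_hat_greatest:
  "0 \<le> a \<Longrightarrow> a \<le> b \<Longrightarrow> b \<le> 1 \<Longrightarrow> (\<And>t. t \<in> {a..b} \<Longrightarrow> c \<le> t - \<delta> t) \<Longrightarrow> c \<le> min_hat \<delta> a b"
  unfolding min_hat_def using hat_image_bounded[of a b] by (intro cInf_greatest) auto

lemma min_hat_nonneg: "0 \<le> a \<Longrightarrow> a \<le> b \<Longrightarrow> b \<le> 1 \<Longrightarrow> 0 \<le> min_hat \<delta> a b"
  using min_hat_greatest[of a b 0] diagonal_le by auto

lemma min_hat_split:
  assumes "0 \<le> a" "a \<le> b" "b \<le> c" "c \<le> 1"
  shows "min_hat \<delta> a c = min (min_hat \<delta> a b) (min_hat \<delta> b c)"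
proof -
  have "{a..c} = {a..b} \<union> {b..c}" using assms by auto
  then have "(\<lambda>t. t - \<delta> t) ` {a..c} = (\<lambda>t. t - \<delta> t) ` {a..b} \<union> (\<lambda>t. t - \<delta> t) ` {b..c}" by auto
  then show ?thesis unfolding min_hat_def
    using hat_image_bounded[of a b] hat_image_bounded[of b c] assms
    by (simp add: cInf_union_distrib inf_min)
qed

lemma min_hat_0_left: "x \<in> {0..1} \<Longrightarrow> min_hat \<delta> 0 x = 0"
  using min_hat_nonneg[of 0 x] min_hat_le[of 0 x 0] diagonal_0 by auto

lemma min_hat_1_right: "x \<in> {0..1} \<Longrightarrow> min_hat \<delta> x 1 = 0"
  using min_hat_nonneg[of x 1] min_hat_le[of x 1 1] diagonal_1 by auto

lemma hat_drop_superadditive: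
  assumes "0 \<le> a" "a \<le> b" "b \<le> c" "c \<le> 1"
  shows "hat_drop \<delta> a c \<le> hat_drop \<delta> a b + hat_drop \<delta> b c"
  using min_hat_split[OF assms] min_hat_le[of a b b] min_hat_le[of b c b] assms
  unfolding hat_drop_def by (auto simp: min_def)

lemma Bertino_lower_bound:
  assumes C: "copula C" "has_diagonal C \<delta>" and ab: "0 \<le> a" "a \<le> b" "b \<le> 1"
  shows "a - min_hat \<delta> a b \<le> C b a"
proof -
  have "a - C b a \<le> min_hat \<delta> a b"
  proof (rule min_hat_greatest)
    fix t assume t: "t \<in> {a..b}"
    have "C t a \<le> C b a" using copula_mono_left[OF C(1), of a t b] t ab by auto
    moreover have "C t t - C t a \<le> t - a" using copula_lipschitz_right[OF C(1), of t a t] t ab by auto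
    moreover have "C t t = \<delta> t" using has_diagonalD[OF C(2)] t ab by auto
    ultimately show "a - C b a \<le> t - \<delta> t" by linarith
  qed (use ab in auto)
  then show ?thesis by linarith
qed

lemma hat_drop_le_copula:
  assumes C: "copula C" "has_diagonal C \<delta>" and "0 \<le> a" "a \<le> s" "s \<le> c" "c \<le> 1"
  shows "hat_drop \<delta> s c \<le> (\<delta> c - C a c) - (\<delta> s - C a s)"
proof -
  have "0 \<le> box_volume C s c s c" "0 \<le> box_volume C a s s c"
    using copula_box_volume_nonneg[OF C(1)] assms by auto
  moreover have "s - min_hat \<delta> s c \<le> C c s" using Bertino_lower_bound[OF C, of s c] assms by auto
  moreover have "C s s = \<delta> s" "C c c = \<delta> c" using has_diagonalD[OF C(2)] assms by auto
  ultimately show ?thesis unfolding hat_drop_def box_volume_def by linarith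
qed

lemma chain_drop_le_copula:
  assumes C: "copula C" "has_diagonal C \<delta>"
  shows "0 \<le> a \<Longrightarrow> a \<le> s \<Longrightarrow> sorted_chain s P b \<Longrightarrow> b \<le> 1 \<Longrightarrow>
    chain_drop \<delta> s P \<le> (\<delta> b - C a b) - (\<delta> s - C a s)"
proof (induction P arbitrary: s)
  case (Cons c P)
  then have "c \<le> b" using sorted_chain_le by auto
  then have "hat_drop \<delta> s c \<le> (\<delta> c - C a c) - (\<delta> s - C a s)"
    using hat_drop_le_copula[OF C, of a s c] Cons.prems by auto
  moreover have "chain_drop \<delta> c P \<le> (\<delta> b - C a b) - (\<delta> c - C a c)"
    using Cons.IH[of c] Cons.prems by auto
  ultimately show ?case by simp
qed simp

lemma chain_drop_split:
  "sorted_chain s P b \<Longrightarrow> 0 \<le> s \<Longrightarrow> s \<le> a \<Longrightarrow> a \<le> b \<Longrightarrow> b \<le> 1 \<Longrightarrow>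
   \<exists>P1 P2. sorted_chain s P1 a \<and> sorted_chain a P2 b
     \<and> chain_drop \<delta> s P \<le> chain_drop \<delta> s P1 + chain_drop \<delta> a P2"
proof (induction P arbitrary: s)
  case Nil
  then show ?case by (intro exI[of _ "[]"]) auto
next
  case (Cons c P)
  show ?case
  proof (cases "c \<le> a")
    case True
    then obtain P1 P2 where "sorted_chain c P1 a" "sorted_chain a P2 b"
        "chain_drop \<delta> c P \<le> chain_drop \<delta> c P1 + chain_drop \<delta> a P2"
      using Cons.IH[of c] Cons.prems by auto
    then show ?thesis using Cons.prems by (intro exI[of _ "c # P1"] exI[of _ P2]) auto
  next
    case False
    have "c \<le> b" using Cons.prems sorted_chain_le by auto
    then have "hat_drop \<delta> s c \<le> hat_drop \<delta> s a + hat_drop \<delta> a c"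
      using hat_drop_superadditive[of s a c] Cons.prems False by auto
    then show ?thesis using Cons.prems False by (intro exI[of _ "[a]"] exI[of _ "c # P"]) auto
  qed
qed

lemma total_drop_bounded:
  assumes x: "x \<in> {0..1}"
  shows "{chain_drop \<delta> 0 P | P. sorted_chain 0 P x} \<noteq> {}"
    and "bdd_above {chain_drop \<delta> 0 P | P. sorted_chain 0 P x}"
proof -
  show "{chain_drop \<delta> 0 P | P. sorted_chain 0 P x} \<noteq> {}"
    using x by (auto intro!: exI[of _ "[x]"])
  obtain C where C: "copula C" "has_diagonal C \<delta>" by (rule diagonal_copula_exists)
  have "chain_drop \<delta> 0 P \<le> 1" if "sorted_chain 0 P x" for P
    using chain_drop_le_copula[OF C, of 0 0 P x] that x copula_margins(2)[OF C(1)] diagonal_0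
      diagonal_le[OF x] by auto
  then show "bdd_above {chain_drop \<delta> 0 P | P. sorted_chain 0 P x}"
    by (auto intro: bdd_aboveI[of _ 1])
qed

lemma chain_drop_le_total_drop: "x \<in> {0..1} \<Longrightarrow> sorted_chain 0 P x \<Longrightarrow> chain_drop \<delta> 0 P \<le> total_drop \<delta> x"
  unfolding total_drop_def using total_drop_bounded[of x] by (intro cSup_upper) auto

lemma total_drop_least:
  "x \<in> {0..1} \<Longrightarrow> (\<And>P. sorted_chain 0 P x \<Longrightarrow> chain_drop \<delta> 0 P \<le> M) \<Longrightarrow> total_drop \<delta> x \<le> M"
  unfolding total_drop_def using total_drop_bounded[of x] by (intro cSup_least) auto

lemma total_drop_superadditive:
  assumes "0 \<le> a" "a \<le> b" "b \<le> 1"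
  shows "total_drop \<delta> a + hat_drop \<delta> a b \<le> total_drop \<delta> b"
proof -
  have "total_drop \<delta> a \<le> total_drop \<delta> b - hat_drop \<delta> a b"
  proof (rule total_drop_least)
    fix P assume P: "sorted_chain 0 P a"
    then have "chain_drop \<delta> 0 (P @ [b]) \<le> total_drop \<delta> b"
      using chain_drop_le_total_drop sorted_chain_snoc assms by auto
    then show "chain_drop \<delta> 0 P \<le> total_drop \<delta> b - hat_drop \<delta> a b"
      using chain_drop_snoc[OF P] by simp
  qed (use assms in auto)
  then show ?thesis by simp
qed

lemma total_drop_le_copula:
  assumes C: "copula C" "has_diagonal C \<delta>" and ab: "0 \<le> a" "a \<le> b" "b \<le> 1"
  shows "total_drop \<delta> b \<le> total_drop \<delta> a + (\<delta> b - C a b)"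
proof (rule total_drop_least)
  fix P assume "sorted_chain 0 P b"
  then obtain P1 P2 where P: "sorted_chain 0 P1 a" "sorted_chain a P2 b"
      "chain_drop \<delta> 0 P \<le> chain_drop \<delta> 0 P1 + chain_drop \<delta> a P2"
    using chain_drop_split ab by blast
  have "chain_drop \<delta> 0 P1 \<le> total_drop \<delta> a" using chain_drop_le_total_drop P(1) ab by auto
  moreover have "chain_drop \<delta> a P2 \<le> (\<delta> b - C a b) - (\<delta> a - C a a)"
    using chain_drop_le_copula[OF C, of a a P2 b] P(2) ab by auto
  moreover have "C a a = \<delta> a" using has_diagonalD[OF C(2)] ab by auto
  ultimately show "chain_drop \<delta> 0 P \<le> total_drop \<delta> a + (\<delta> b - C a b)" using P(3) by linarith
qed (use ab in auto)

lemma total_drop_increment_le_diagonal: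
  assumes "0 \<le> a" "a \<le> b" "b \<le> 1"
  shows "total_drop \<delta> b - total_drop \<delta> a \<le> \<delta> b - \<delta> a"
proof -
  obtain C where C: "copula C" "has_diagonal C \<delta>" by (rule diagonal_copula_exists)
  have "C a a \<le> C a b" using copula_mono_right[OF C(1), of a a b] assms by auto
  then show ?thesis using total_drop_le_copula[OF C assms] has_diagonalD[OF C(2), of a] assms by auto
qed

lemma total_drop_increment_le:
  assumes "0 \<le> a" "a \<le> b" "b \<le> 1"
  shows "total_drop \<delta> b - total_drop \<delta> a \<le> b - a"
proof -
  obtain C where C: "copula C" "has_diagonal C \<delta>" by (rule diagonal_copula_exists)
  have "C b b - C a b \<le> b - a" using copula_lipschitz_left[OF C(1), of b a b] assms by auto
  then show ?thesis using total_drop_le_copula[OF C assms] has_diagonalD[OF C(2), of b] assms by auto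
qed

end

definition Cbar_expl :: "(real \<Rightarrow> real) \<Rightarrow> real \<Rightarrow> real \<Rightarrow> real" where
  "Cbar_expl \<delta> x y = min x (\<delta> y - total_drop \<delta> y + total_drop \<delta> x)"

definition Dsplice_expl :: "(real \<Rightarrow> real) \<Rightarrow> real \<Rightarrow> real \<Rightarrow> real" where
  "Dsplice_expl \<delta> x y = (if x \<le> y then Cbar_expl \<delta> x y else y - min_hat \<delta> y x)"

context
  fixes \<delta> :: "real \<Rightarrow> real"
  assumes \<delta>: "diagonal_section \<delta>"
begin

lemma Cbar_expl_diagonal: "t \<in> {0..1} \<Longrightarrow> Cbar_expl \<delta> t t = \<delta> t"
  unfolding Cbar_expl_def using diagonal_le[OF \<delta>] by simp

lemma Dsplice_expl_above:
  "x \<le> y \<Longrightarrow> Dsplice_expl \<delta> x y = total_drop \<delta> x + min (x - total_drop \<delta> x) (\<delta> y - total_drop \<delta> y)"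
  unfolding Dsplice_expl_def Cbar_expl_def by (simp add: min_def)

lemma Dsplice_expl_below: "x \<in> {0..1} \<Longrightarrow> y \<le> x \<Longrightarrow> Dsplice_expl \<delta> x y = y - min_hat \<delta> y x"
  unfolding Dsplice_expl_def using Cbar_expl_diagonal[of x] min_hat_point[of \<delta> x] by auto

lemma Dsplice_expl_diagonal: "has_diagonal (Dsplice_expl \<delta>) \<delta>"
  unfolding has_diagonal_def Dsplice_expl_def using Cbar_expl_diagonal by simp

lemma box_volume_Dsplice_expl_above:
  assumes "0 \<le> x1" "x1 \<le> x2" "x2 \<le> y1" "y1 \<le> y2" "y2 \<le> 1"
  shows "0 \<le> box_volume (Dsplice_expl \<delta>) x1 x2 y1 y2"
proof -
  have "x1 - total_drop \<delta> x1 \<le> x2 - total_drop \<delta> x2"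
    using total_drop_increment_le[OF \<delta>, of x1 x2] assms by auto
  moreover have "\<delta> y1 - total_drop \<delta> y1 \<le> \<delta> y2 - total_drop \<delta> y2"
    using total_drop_increment_le_diagonal[OF \<delta>, of y1 y2] assms by auto
  ultimately show ?thesis
    using box_volume_min_nonneg[of "\<lambda>x. x - total_drop \<delta> x" x1 x2 "\<lambda>y. \<delta> y - total_drop \<delta> y" y1 y2
        "total_drop \<delta>"] assms
    unfolding box_volume_def by (simp add: Dsplice_expl_above)
qed

lemma box_volume_Dsplice_expl_below:
  assumes "0 \<le> y1" "y1 \<le> y2" "y2 \<le> x1" "x1 \<le> x2" "x2 \<le> 1"
  shows "0 \<le> box_volume (Dsplice_expl \<delta>) x1 x2 y1 y2"
proof -
  let ?A = "min_hat \<delta> y1 y2" and ?M = "min_hat \<delta> y2 x1" and ?B = "min_hat \<delta> x1 x2"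
  have "min_hat \<delta> y1 x2 = min ?A (min ?M ?B)" "min_hat \<delta> y2 x2 = min ?M ?B"
    "min_hat \<delta> y1 x1 = min ?A ?M"
    using min_hat_split[OF \<delta>, of y1 y2 x2] min_hat_split[OF \<delta>, of y2 x1 x2]
      min_hat_split[OF \<delta>, of y1 y2 x1] assms by auto
  moreover have "box_volume (Dsplice_expl \<delta>) x1 x2 y1 y2
      = min_hat \<delta> y1 x2 + min_hat \<delta> y2 x1 - min_hat \<delta> y2 x2 - min_hat \<delta> y1 x1"
    unfolding box_volume_def using assms by (simp add: Dsplice_expl_below)
  ultimately show ?thesis by (simp add: min_def)
qed

lemma box_volume_Dsplice_expl_square:
  assumes "0 \<le> a" "a \<le> b" "b \<le> 1"
  shows "0 \<le> box_volume (Dsplice_expl \<delta>) a b a b"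
proof (cases "a = b")
  case True
  then show ?thesis by (simp add: box_volume_degenerate)
next
  case False
  have "Dsplice_expl \<delta> a b \<le> \<delta> b - total_drop \<delta> b + total_drop \<delta> a"
    using assms unfolding Dsplice_expl_def Cbar_expl_def by simp
  moreover have "total_drop \<delta> a + hat_drop \<delta> a b \<le> total_drop \<delta> b"
    using total_drop_superadditive[OF \<delta> assms] .
  moreover have "Dsplice_expl \<delta> b a = a - min_hat \<delta> a b"
    using Dsplice_expl_below[of b a] assms False by auto
  moreover have "Dsplice_expl \<delta> a a = \<delta> a" "Dsplice_expl \<delta> b b = \<delta> b"
    using Dsplice_expl_diagonal assms unfolding has_diagonal_def by auto
  ultimately show ?thesis unfolding box_volume_def hat_drop_def by simp
qed

lemma Dsplice_expl_copula: "copula (Dsplice_expl \<delta>)"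
proof (rule copulaI)
  fix x y :: real assume xy: "x \<in> {0..1}" "y \<in> {0..1}"
  show "Dsplice_expl \<delta> x y \<in> {0..1}"
  proof (cases "x \<le> y")
    case True
    then have "total_drop \<delta> y - total_drop \<delta> x \<le> \<delta> y - \<delta> x"
      using total_drop_increment_le_diagonal[OF \<delta>, of x y] xy by auto
    then show ?thesis
      using True xy diagonal_nonneg[OF \<delta>, of x] unfolding Dsplice_expl_def Cbar_expl_def by auto
  next
    case False
    then show ?thesis
      using xy min_hat_le[OF \<delta>, of y x y] min_hat_nonneg[OF \<delta>, of y x] diagonal_nonneg[OF \<delta>, of y]
      unfolding Dsplice_expl_def by auto
  qed
next
  fix x :: real assume x: "x \<in> {0..1}"
  have "total_drop \<delta> x - total_drop \<delta> 0 \<le> \<delta> x - \<delta> 0"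
    using total_drop_increment_le_diagonal[OF \<delta>, of 0 x] x by auto
  moreover have "total_drop \<delta> 1 - total_drop \<delta> x \<le> 1 - x"
    using total_drop_increment_le[OF \<delta>, of x 1] x by auto
  moreover have "Dsplice_expl \<delta> x 0 = 0" "Dsplice_expl \<delta> 1 x = x"
    using x Dsplice_expl_below[of x 0] Dsplice_expl_below[of 1 x] min_hat_0_left[OF \<delta> x]
      min_hat_1_right[OF \<delta> x] by auto
  ultimately show "Dsplice_expl \<delta> x 0 = 0 \<and> Dsplice_expl \<delta> 0 x = 0 \<and>
      Dsplice_expl \<delta> x 1 = x \<and> Dsplice_expl \<delta> 1 x = x"
    using x diagonal_0[OF \<delta>] diagonal_1[OF \<delta>] unfolding Dsplice_expl_def Cbar_expl_def by auto
next
  fix x1 x2 y1 y2 :: real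
  assume box: "0 \<le> x1" "x1 \<le> x2" "x2 \<le> 1" "0 \<le> y1" "y1 \<le> y2" "y2 \<le> 1"
  show "0 \<le> box_volume (Dsplice_expl \<delta>) x1 x2 y1 y2"
    using box_volume_Dsplice_expl_above box_volume_Dsplice_expl_below box_volume_Dsplice_expl_square box
    by (rule box_volume_nonneg_by_triangles)
qed

lemma Cbar_eq_Cbar_expl:
  assumes "0 \<le> x" "x \<le> y" "y \<le> 1"
  shows "Cbar \<delta> x y = Cbar_expl \<delta> x y"
  unfolding Cbar_def
proof (rule cSup_eq_maximum)
  show "Cbar_expl \<delta> x y \<in> {C x y |C. copula C \<and> has_diagonal C \<delta>}"
    using Dsplice_expl_copula Dsplice_expl_diagonal assms(2)
    by (auto simp: Dsplice_expl_def intro!: exI[of _ "Dsplice_expl \<delta>"])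
next
  fix z assume "z \<in> {C x y |C. copula C \<and> has_diagonal C \<delta>}"
  then obtain C where C: "z = C x y" "copula C" "has_diagonal C \<delta>" by blast
  have "C x y \<le> C x 1" using copula_mono_right[OF C(2), of x y 1] assms by auto
  moreover have "total_drop \<delta> y \<le> total_drop \<delta> x + (\<delta> y - C x y)"
    using total_drop_le_copula[OF \<delta> C(2,3) assms] .
  ultimately show "z \<le> Cbar_expl \<delta> x y"
    using C(1) copula_margins(3)[OF C(2), of x] assms unfolding Cbar_expl_def by auto
qed

lemma Dsplice_eq_Dsplice_expl: "x \<in> {0..1} \<Longrightarrow> y \<in> {0..1} \<Longrightarrow> Dsplice \<delta> x y = Dsplice_expl \<delta> x y"
  unfolding Dsplice_def Dsplice_expl_def Bertino_def min_hat_def using Cbar_eq_Cbar_expl[of x y]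
  by (auto simp: min_def max_def)

end

theorem proposition4p3:
  fixes \<delta> :: "real \<Rightarrow> real"
  assumes "diagonal_section \<delta>"
  shows "copula (Dsplice \<delta>)"
  using copula_cong[OF Dsplice_expl_copula[OF assms]] Dsplice_eq_Dsplice_expl[OF assms] by blast

end
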